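(* Every proof in $\mathsf{PA}^\exists$ of a $\Sigma^0_1$ statement $\exists\alpha\mathsf{P}$ (with $\mathsf{P}$ atomic) can be transformed into a proof of $\exists\alpha\mathsf{P}$ in $\mathsf{HA}^\exists+\mathsf{EM}_1^-$.
   Context: The $\exists$-translation $F\mapsto F^\exists$ is: $F^\exists=F$ for atomic $F$; commuting with $\wedge,\vee,\to,\exists$; $(\forall xF)^\exists=\neg\exists x\neg F^\exists$. $\mathsf{PA}^\exists$ is the natural deduction system for arithmetic (over $0,\mathsf{S},+,\cdot,=$) with the intuitionistic rules for $\wedge,\vee,\to,\exists,\bot$, the $\exists$-translated arithmetical axioms, the translated induction rule (from $\Gamma\vdash A(0)$ and $\Gamma\vdash\neg\exists\alpha\neg(A(\alpha)\to A(\mathsf{S}\alpha))$ infer $\Gamma\vdash\neg\exists\alpha\neg A(\alpha)$), and the full excluded middle rule $\mathsf{EM}$ (from $\Gamma,A\vdash C$ and $\Gamma,\neg A\vdash C$ infer $\Gamma\vdash C$, $A,C$ arbitrary). $\mathsf{HA}^\exists$ is intuitionistic arithmetic with the $\exists$-translations of the Heyting arithmetic axioms. $\mathsf{EM}_1^-$ is the rule: for atomic $\mathsf{P}$ and $C$ (with $\mathsf{P}^\bot$ the complementary atomic predicate of $\mathsf{P}$), from $\Gamma,\forall\alpha\mathsf{P}\vdash\exists\beta C$ and $\Gamma,\exists\alpha\mathsf{P}^\bot\vdash\exists\beta C$ infer $\Gamma\vdash\exists\beta C$. *)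

theory Defs
  imports Main
begin

datatype tm = Var nat | Zero | Sc tm | Pl tm tm | Tms tm tm

text \<open>Atomic formulas: equations and their complements (disequations),
  so that every atomic predicate P has an atomic complement P-bot.
  Ex and All bind de Bruijn index 0.\<close>
datatype form =
    Eq tm tm | Neq tm tm | Bot
  | Conj form form | Disj form form | Imp form form
  | Ex form | All form

definition Neg :: "form \<Rightarrow> form" where "Neg A = Imp A Bot"

fun atomic :: "form \<Rightarrow> bool" where
  "atomic (Eq t u) = True"
| "atomic (Neq t u) = True"
| "atomic _ = False"

fun comp :: "form \<Rightarrow> form" where
  "comp (Eq t u) = Neq t u"
| "comp (Neq t u) = Eq t u"
| "comp A = A"

fun tsubst :: "(nat \<Rightarrow> tm) \<Rightarrow> tm \<Rightarrow> tm" where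
  "tsubst \<sigma> (Var n) = \<sigma> n"
| "tsubst \<sigma> Zero = Zero"
| "tsubst \<sigma> (Sc t) = Sc (tsubst \<sigma> t)"
| "tsubst \<sigma> (Pl t u) = Pl (tsubst \<sigma> t) (tsubst \<sigma> u)"
| "tsubst \<sigma> (Tms t u) = Tms (tsubst \<sigma> t) (tsubst \<sigma> u)"

definition up :: "(nat \<Rightarrow> tm) \<Rightarrow> nat \<Rightarrow> tm" where
  "up \<sigma> n = (case n of 0 \<Rightarrow> Var 0 | Suc m \<Rightarrow> tsubst (\<lambda>k. Var (Suc k)) (\<sigma> m))"

fun fsubst :: "(nat \<Rightarrow> tm) \<Rightarrow> form \<Rightarrow> form" where
  "fsubst \<sigma> (Eq t u) = Eq (tsubst \<sigma> t) (tsubst \<sigma> u)"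
| "fsubst \<sigma> (Neq t u) = Neq (tsubst \<sigma> t) (tsubst \<sigma> u)"
| "fsubst \<sigma> Bot = Bot"
| "fsubst \<sigma> (Conj A B) = Conj (fsubst \<sigma> A) (fsubst \<sigma> B)"
| "fsubst \<sigma> (Disj A B) = Disj (fsubst \<sigma> A) (fsubst \<sigma> B)"
| "fsubst \<sigma> (Imp A B) = Imp (fsubst \<sigma> A) (fsubst \<sigma> B)"
| "fsubst \<sigma> (Ex A) = Ex (fsubst (up \<sigma>) A)"
| "fsubst \<sigma> (All A) = All (fsubst (up \<sigma>) A)"

definition inst :: "form \<Rightarrow> tm \<Rightarrow> form" where
  "inst A t = fsubst (\<lambda>n. case n of 0 \<Rightarrow> t | Suc m \<Rightarrow> Var m) A"

definition lift :: "form \<Rightarrow> form" where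
  "lift A = fsubst (\<lambda>n. Var (Suc n)) A"

definition succ_body :: "form \<Rightarrow> form" where
  "succ_body A = fsubst (\<lambda>n. case n of 0 \<Rightarrow> Sc (Var 0) | Suc m \<Rightarrow> Var (Suc m)) A"

fun extr :: "form \<Rightarrow> form" where
  "extr (Eq t u) = Eq t u"
| "extr (Neq t u) = Neq t u"
| "extr Bot = Bot"
| "extr (Conj A B) = Conj (extr A) (extr B)"
| "extr (Disj A B) = Disj (extr A) (extr B)"
| "extr (Imp A B) = Imp (extr A) (extr B)"
| "extr (Ex A) = Ex (extr A)"
| "extr (All A) = Neg (Ex (Neg (extr A)))"

definition ha_axioms :: "form set" where
  "ha_axioms = {
     All (Eq (Var 0) (Var 0)),
     All (All (Imp (Eq (Var 1) (Var 0)) (Eq (Var 0) (Var 1)))),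
     All (All (All (Imp (Eq (Var 2) (Var 1)) (Imp (Eq (Var 1) (Var 0)) (Eq (Var 2) (Var 0)))))),
     All (All (Imp (Eq (Var 1) (Var 0)) (Eq (Sc (Var 1)) (Sc (Var 0))))),
     All (All (All (All (Imp (Eq (Var 3) (Var 2)) (Imp (Eq (Var 1) (Var 0))
        (Eq (Pl (Var 3) (Var 1)) (Pl (Var 2) (Var 0)))))))),
     All (All (All (All (Imp (Eq (Var 3) (Var 2)) (Imp (Eq (Var 1) (Var 0))
        (Eq (Tms (Var 3) (Var 1)) (Tms (Var 2) (Var 0)))))))),
     All (Neg (Eq (Sc (Var 0)) Zero)),
     All (All (Imp (Eq (Sc (Var 1)) (Sc (Var 0))) (Eq (Var 1) (Var 0)))),
     All (Eq (Pl (Var 0) Zero) (Var 0)),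
     All (All (Eq (Pl (Var 1) (Sc (Var 0))) (Sc (Pl (Var 1) (Var 0))))),
     All (Eq (Tms (Var 0) Zero) Zero),
     All (All (Eq (Tms (Var 1) (Sc (Var 0))) (Pl (Tms (Var 1) (Var 0)) (Var 1)))),
     All (All (Imp (Neq (Var 1) (Var 0)) (Neg (Eq (Var 1) (Var 0))))),
     All (All (Imp (Neg (Eq (Var 1) (Var 0))) (Neq (Var 1) (Var 0))))
   }"

datatype sys = PAex | HAexEM1

inductive deriv :: "sys \<Rightarrow> form set \<Rightarrow> form \<Rightarrow> bool" where
  hyp:   "A \<in> \<Gamma> \<Longrightarrow> deriv s \<Gamma> A"
| ax:    "B \<in> ha_axioms \<Longrightarrow> deriv s \<Gamma> (extr B)"
| conjI: "deriv s \<Gamma> A \<Longrightarrow> deriv s \<Gamma> B \<Longrightarrow> deriv s \<Gamma> (Conj A B)"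
| conjE1: "deriv s \<Gamma> (Conj A B) \<Longrightarrow> deriv s \<Gamma> A"
| conjE2: "deriv s \<Gamma> (Conj A B) \<Longrightarrow> deriv s \<Gamma> B"
| disjI1: "deriv s \<Gamma> A \<Longrightarrow> deriv s \<Gamma> (Disj A B)"
| disjI2: "deriv s \<Gamma> B \<Longrightarrow> deriv s \<Gamma> (Disj A B)"
| disjE: "deriv s \<Gamma> (Disj A B) \<Longrightarrow> deriv s (insert A \<Gamma>) C \<Longrightarrow>
          deriv s (insert B \<Gamma>) C \<Longrightarrow> deriv s \<Gamma> C"
| impI:  "deriv s (insert A \<Gamma>) B \<Longrightarrow> deriv s \<Gamma> (Imp A B)"
| impE:  "deriv s \<Gamma> (Imp A B) \<Longrightarrow> deriv s \<Gamma> A \<Longrightarrow> deriv s \<Gamma> B"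
| botE:  "deriv s \<Gamma> Bot \<Longrightarrow> deriv s \<Gamma> A"
| exI:   "deriv s \<Gamma> (inst A t) \<Longrightarrow> deriv s \<Gamma> (Ex A)"
| exE:   "deriv s \<Gamma> (Ex A) \<Longrightarrow> deriv s (insert A (lift ` \<Gamma>)) (lift C) \<Longrightarrow> deriv s \<Gamma> C"
| ind:   "deriv s \<Gamma> (inst A Zero) \<Longrightarrow>
          deriv s \<Gamma> (Neg (Ex (Neg (Imp A (succ_body A))))) \<Longrightarrow>
          deriv s \<Gamma> (Neg (Ex (Neg A)))"
| em:    "deriv PAex (insert A \<Gamma>) C \<Longrightarrow> deriv PAex (insert (Neg A) \<Gamma>) C \<Longrightarrow>
          deriv PAex \<Gamma> C"
| em1:   "atomic P \<Longrightarrow> atomic C \<Longrightarrow>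
          deriv HAexEM1 (insert (Neg (Ex (Neg P))) \<Gamma>) (Ex C) \<Longrightarrow>
          deriv HAexEM1 (insert (Ex (comp P)) \<Gamma>) (Ex C) \<Longrightarrow>
          deriv HAexEM1 \<Gamma> (Ex C)"

end

theory Submission
  imports Defs
begin

text \<open>
  The axioms are \<open>\<exists>\<close>-translations
  and so contain no \<open>\<forall>\<close>; on such formulas the Kolmogorov translation is intuitionistically
  equivalent to plain double negation. Thus a proof of \<open>\<exists>\<alpha> P\<close> yields one of
  \<open>\<not>\<not>\<exists>\<alpha> P\<close>. Finally \<open>EM\<^sub>1\<^sup>-\<close> for \<open>P\<^sup>\<bottom>\<close> gives Markov's principle
  for atomic \<open>P\<close>: the case \<open>\<forall>\<alpha> P\<^sup>\<bottom>\<close> refutes \<open>\<not>\<not>\<exists>\<alpha> P\<close>, because the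
  axioms make \<open>P\<close> and \<open>P\<^sup>\<bottom>\<close> contradictory.
\<close>

abbreviation NegNeg :: "form \<Rightarrow> form" where "NegNeg A \<equiv> Neg (Neg A)"

lemma tsubst_tsubst: "tsubst \<sigma> (tsubst \<tau> t) = tsubst (\<lambda>n. tsubst \<sigma> (\<tau> n)) t"
  by (induction t) auto

lemma up_tsubst: "up (\<lambda>n. tsubst \<sigma> (\<tau> n)) = (\<lambda>n. tsubst (up \<sigma>) (up \<tau> n))"
  by (auto simp: up_def tsubst_tsubst fun_eq_iff split: nat.split)

lemma fsubst_fsubst: "fsubst \<sigma> (fsubst \<tau> A) = fsubst (\<lambda>n. tsubst \<sigma> (\<tau> n)) A"
  by (induction A arbitrary: \<sigma> \<tau>) (auto simp: tsubst_tsubst up_tsubst)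

lemma tsubst_Var [simp]: "tsubst Var t = t"
  by (induction t) auto

lemma up_Var [simp]: "up Var = Var"
  by (auto simp: up_def fun_eq_iff split: nat.split)

lemma fsubst_Var [simp]: "fsubst Var A = A"
  by (induction A) auto

lemma fsubst_Neg [simp]: "fsubst \<sigma> (Neg A) = Neg (fsubst \<sigma> A)"
  by (simp add: Neg_def)

lemma inst_Neg [simp]: "inst (Neg A) t = Neg (inst A t)"
  by (simp add: inst_def)

lemma lift_Neg [simp]: "lift (Neg A) = Neg (lift A)"
  by (simp add: lift_def)

lemma lift_Bot [simp]: "lift Bot = Bot"
  by (simp add: lift_def)

lemma extr_Neg [simp]: "extr (Neg A) = Neg (extr A)"
  by (simp add: Neg_def)

text \<open>\<open>fsubst (up (\<lambda>n. Var (Suc n))) A\<close> is the body of \<open>lift (Ex A)\<close>.\<close>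

lemma inst_lift_Ex_body: "inst (fsubst (up (\<lambda>n. Var (Suc n))) A) (Var 0) = A"
proof -
  have "(\<lambda>n. tsubst (\<lambda>n. case n of 0 \<Rightarrow> Var 0 | Suc m \<Rightarrow> Var m) (up (\<lambda>n. Var (Suc n)) n)) = Var"
    by (auto simp: up_def fun_eq_iff split: nat.split)
  then show ?thesis
    by (simp add: inst_def fsubst_fsubst)
qed

lemma deriv_mono: "deriv s \<Gamma> A \<Longrightarrow> \<Gamma> \<subseteq> \<Delta> \<Longrightarrow> deriv s \<Delta> A"
proof (induction arbitrary: \<Delta> rule: deriv.induct)
  case (disjE s \<Gamma> A B C)
  then show ?case by (meson deriv.disjE insert_mono)
next
  case (impI s A \<Gamma> B)
  then show ?case by (meson deriv.impI insert_mono)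
next
  case (exE s \<Gamma> A C)
  then show ?case by (meson deriv.exE image_mono insert_mono)
next
  case (em A \<Gamma> C)
  then show ?case by (meson deriv.em insert_mono)
next
  case (em1 P C \<Gamma>)
  then show ?case by (meson deriv.em1 insert_mono)
qed (auto intro: deriv.intros)

lemma deriv_insert: "deriv s \<Gamma> A \<Longrightarrow> deriv s (insert B \<Gamma>) A"
  using deriv_mono by blast

lemma deriv_insert_under: "deriv s (insert A \<Gamma>) C \<Longrightarrow> deriv s (insert A (insert B \<Gamma>)) C"
  by (erule deriv_mono) blast

lemma deriv_hyp1: "deriv s (insert A \<Gamma>) A"
  by (rule deriv.hyp) simp

lemma deriv_hyp2: "deriv s (insert B (insert A \<Gamma>)) A"
  by (rule deriv.hyp) simp

lemma deriv_hyp3: "deriv s (insert C (insert B (insert A \<Gamma>))) A"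
  by (rule deriv.hyp) simp

lemma deriv_cut: "deriv s \<Gamma> A \<Longrightarrow> deriv s (insert A \<Gamma>) B \<Longrightarrow> deriv s \<Gamma> B"
  by (rule deriv.impE[OF deriv.impI])

lemma NegI: "deriv s (insert A \<Gamma>) Bot \<Longrightarrow> deriv s \<Gamma> (Neg A)"
  unfolding Neg_def by (rule deriv.impI)

lemma NegE: "deriv s \<Gamma> (Neg A) \<Longrightarrow> deriv s \<Gamma> A \<Longrightarrow> deriv s \<Gamma> Bot"
  unfolding Neg_def by (rule deriv.impE)

lemma NegNegI: "deriv s \<Gamma> A \<Longrightarrow> deriv s \<Gamma> (NegNeg A)"
  by (rule NegI, rule NegE[OF deriv_hyp1], erule deriv_insert)

lemma NegNeg_Bot: "deriv s \<Gamma> (NegNeg A) \<Longrightarrow> deriv s (insert A \<Gamma>) Bot \<Longrightarrow> deriv s \<Gamma> Bot"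
  by (erule NegE, rule NegI)

lemma NegNeg_Neg:
  assumes "deriv s \<Gamma> (NegNeg A)" and "deriv s (insert A \<Gamma>) (Neg B)"
  shows "deriv s \<Gamma> (Neg B)"
proof (rule NegI, rule NegNeg_Bot[OF deriv_insert[OF assms(1)]])
  show "deriv s (insert A (insert B \<Gamma>)) Bot"
    by (rule NegE, rule deriv_mono[OF assms(2)], blast, rule deriv_hyp2)
qed

lemma NegNeg_mono:
  assumes "deriv s \<Gamma> (NegNeg A)" and "deriv s (insert A \<Gamma>) B"
  shows "deriv s \<Gamma> (NegNeg B)"
  using assms by (blast intro: NegNeg_Neg NegNegI)

lemma Neg_NegNeg: "deriv s \<Gamma> (Neg (NegNeg A)) \<Longrightarrow> deriv s \<Gamma> (Neg A)"
  by (rule NegI, rule NegE, erule deriv_insert, rule NegNegI, rule deriv_hyp1)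

lemma NegNeg_Conj:
  assumes "deriv s \<Gamma> (NegNeg A)" and "deriv s \<Gamma> (NegNeg B)"
  shows "deriv s \<Gamma> (NegNeg (Conj A B))"
  by (rule NegNeg_Neg[OF assms(1)], rule NegNeg_mono[OF deriv_insert[OF assms(2)]],
      rule deriv.conjI, rule deriv_hyp2, rule deriv_hyp1)

lemma lift_ExI: "deriv s \<Gamma> A \<Longrightarrow> deriv s \<Gamma> (lift (Ex A))"
  by (simp add: lift_def, rule deriv.exI[where t="Var 0"]) (simp add: inst_lift_Ex_body)

lemma Ex_mono:
  assumes "deriv s \<Gamma> (Ex A)" and "deriv s (insert A (lift ` \<Gamma>)) B"
  shows "deriv s \<Gamma> (Ex B)"
  by (rule deriv.exE[OF assms(1) lift_ExI[OF assms(2)]])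

lemma Ex_NegNeg:
  assumes "deriv s \<Gamma> (Ex (NegNeg A))"
  shows "deriv s \<Gamma> (NegNeg (Ex A))"
proof (rule deriv.exE[OF assms])
  have "deriv s (insert (NegNeg A) (lift ` \<Gamma>)) (NegNeg (lift (Ex A)))"
    by (rule NegNeg_mono[OF deriv_hyp1], rule lift_ExI, rule deriv_hyp1)
  then show "deriv s (insert (NegNeg A) (lift ` \<Gamma>)) (lift (NegNeg (Ex A)))"
    by simp
qed

lemma forall_elim: "deriv s \<Gamma> (Neg (Ex (Neg A))) \<Longrightarrow> deriv s \<Gamma> (NegNeg (inst A t))"
  by (rule NegI, rule NegE, erule deriv_insert, rule deriv.exI[where t=t]) (simp add: deriv_hyp1)

lemma Neg_Ex_antimono:
  assumes "deriv s \<Gamma> (Neg (Ex B))" and "deriv s (insert A (lift ` \<Gamma>)) B"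
  shows "deriv s \<Gamma> (Neg (Ex A))"
proof (rule NegI, rule NegE[OF deriv_insert[OF assms(1)]], rule Ex_mono[OF deriv_hyp1])
  show "deriv s (insert A (lift ` insert (Ex A) \<Gamma>)) B"
    by (rule deriv_mono[OF assms(2)]) blast
qed

section \<open>The Kolmogorov translation\<close>

fun kolmogorov :: "form \<Rightarrow> form" where
  "kolmogorov (Eq t u) = NegNeg (Eq t u)"
| "kolmogorov (Neq t u) = NegNeg (Neq t u)"
| "kolmogorov Bot = Bot"
| "kolmogorov (Conj A B) = NegNeg (Conj (kolmogorov A) (kolmogorov B))"
| "kolmogorov (Disj A B) = NegNeg (Disj (kolmogorov A) (kolmogorov B))"
| "kolmogorov (Imp A B) = NegNeg (Imp (kolmogorov A) (kolmogorov B))"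
| "kolmogorov (Ex A) = NegNeg (Ex (kolmogorov A))"
| "kolmogorov (All A) = NegNeg (All (kolmogorov A))"

lemma fsubst_kolmogorov: "fsubst \<sigma> (kolmogorov A) = kolmogorov (fsubst \<sigma> A)"
  by (induction A arbitrary: \<sigma>) auto

lemma kolmogorov_inst: "kolmogorov (inst A t) = inst (kolmogorov A) t"
  by (simp add: inst_def fsubst_kolmogorov)

lemma kolmogorov_lift: "kolmogorov (lift A) = lift (kolmogorov A)"
  by (simp add: lift_def fsubst_kolmogorov)

lemma kolmogorov_succ_body: "kolmogorov (succ_body A) = succ_body (kolmogorov A)"
  by (simp add: succ_body_def fsubst_kolmogorov)

lemma kolmogorov_Neg: "kolmogorov (Neg A) = NegNeg (Neg (kolmogorov A))"
  by (simp add: Neg_def)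

lemma kolmogorov_Bot_or_Neg: "kolmogorov A = Bot \<or> (\<exists>B. kolmogorov A = Neg B)"
  by (cases A) auto

lemma kolmogorov_stable: "deriv s \<Gamma> (NegNeg (kolmogorov A)) \<Longrightarrow> deriv s \<Gamma> (kolmogorov A)"
  using kolmogorov_Bot_or_Neg[of A] by (metis NegNeg_Bot deriv_hyp1 Neg_NegNeg)

lemma NegNeg_kolmogorov:
  "deriv s \<Gamma> (NegNeg A) \<Longrightarrow> deriv s (insert A \<Gamma>) (kolmogorov B) \<Longrightarrow> deriv s \<Gamma> (kolmogorov B)"
  using kolmogorov_Bot_or_Neg[of B] by (auto intro: NegNeg_Bot NegNeg_Neg)

fun all_free :: "form \<Rightarrow> bool" where
  "all_free (Conj A B) = (all_free A \<and> all_free B)"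
| "all_free (Disj A B) = (all_free A \<and> all_free B)"
| "all_free (Imp A B) = (all_free A \<and> all_free B)"
| "all_free (Ex A) = all_free A"
| "all_free (All A) = False"
| "all_free _ = True"

lemma all_free_extr: "all_free (extr A)"
  by (induction A) (auto simp: Neg_def)

lemma kolmogorov_Conj_iff:
  assumes A: "\<And>\<Gamma>. deriv s \<Gamma> (kolmogorov A) \<longleftrightarrow> deriv s \<Gamma> (NegNeg A)"
    and B: "\<And>\<Gamma>. deriv s \<Gamma> (kolmogorov B) \<longleftrightarrow> deriv s \<Gamma> (NegNeg B)"
  shows "deriv s \<Gamma> (kolmogorov (Conj A B)) \<longleftrightarrow> deriv s \<Gamma> (NegNeg (Conj A B))"
proof
  assume "deriv s \<Gamma> (kolmogorov (Conj A B))"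
  then have "deriv s \<Gamma> (NegNeg (Conj (kolmogorov A) (kolmogorov B)))"
    by simp
  then show "deriv s \<Gamma> (NegNeg (Conj A B))"
  proof (rule NegNeg_Neg)
    let ?\<Delta> = "insert (Conj (kolmogorov A) (kolmogorov B)) \<Gamma>"
    have "deriv s ?\<Delta> (NegNeg A)" and "deriv s ?\<Delta> (NegNeg B)"
      using A B deriv.conjE1 deriv.conjE2 deriv_hyp1 by blast+
    then show "deriv s ?\<Delta> (NegNeg (Conj A B))"
      by (rule NegNeg_Conj)
  qed
next
  assume "deriv s \<Gamma> (NegNeg (Conj A B))"
  then have "deriv s \<Gamma> (NegNeg (Conj (kolmogorov A) (kolmogorov B)))"
  proof (rule NegNeg_mono)
    let ?\<Delta> = "insert (Conj A B) \<Gamma>"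
    have "deriv s ?\<Delta> (kolmogorov A)" and "deriv s ?\<Delta> (kolmogorov B)"
      using A B NegNegI deriv.conjE1 deriv.conjE2 deriv_hyp1 by blast+
    then show "deriv s ?\<Delta> (Conj (kolmogorov A) (kolmogorov B))"
      by (rule deriv.conjI)
  qed
  then show "deriv s \<Gamma> (kolmogorov (Conj A B))"
    by simp
qed

lemma kolmogorov_Disj_iff:
  assumes A: "\<And>\<Gamma>. deriv s \<Gamma> (kolmogorov A) \<longleftrightarrow> deriv s \<Gamma> (NegNeg A)"
    and B: "\<And>\<Gamma>. deriv s \<Gamma> (kolmogorov B) \<longleftrightarrow> deriv s \<Gamma> (NegNeg B)"
  shows "deriv s \<Gamma> (kolmogorov (Disj A B)) \<longleftrightarrow> deriv s \<Gamma> (NegNeg (Disj A B))"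
proof
  assume "deriv s \<Gamma> (kolmogorov (Disj A B))"
  then have "deriv s \<Gamma> (NegNeg (Disj (kolmogorov A) (kolmogorov B)))"
    by simp
  then show "deriv s \<Gamma> (NegNeg (Disj A B))"
  proof (rule NegNeg_Neg)
    let ?\<Delta> = "insert (Disj (kolmogorov A) (kolmogorov B)) \<Gamma>"
    have "deriv s (insert (kolmogorov A) ?\<Delta>) (NegNeg (Disj A B))"
      using NegNeg_mono[OF iffD1[OF A deriv_hyp1] deriv.disjI1[OF deriv_hyp1]] .
    moreover have "deriv s (insert (kolmogorov B) ?\<Delta>) (NegNeg (Disj A B))"
      using NegNeg_mono[OF iffD1[OF B deriv_hyp1] deriv.disjI2[OF deriv_hyp1]] .
    ultimately show "deriv s ?\<Delta> (NegNeg (Disj A B))"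
      by (rule deriv.disjE[OF deriv_hyp1])
  qed
next
  assume "deriv s \<Gamma> (NegNeg (Disj A B))"
  then have "deriv s \<Gamma> (NegNeg (Disj (kolmogorov A) (kolmogorov B)))"
  proof (rule NegNeg_mono)
    let ?\<Delta> = "insert (Disj A B) \<Gamma>"
    have "deriv s (insert A ?\<Delta>) (kolmogorov A)" and "deriv s (insert B ?\<Delta>) (kolmogorov B)"
      using A B NegNegI deriv_hyp1 by blast+
    then show "deriv s ?\<Delta> (Disj (kolmogorov A) (kolmogorov B))"
      by (blast intro: deriv.disjE[OF deriv_hyp1] deriv.disjI1 deriv.disjI2)
  qed
  then show "deriv s \<Gamma> (kolmogorov (Disj A B))"
    by simp
qed

lemma kolmogorov_Imp_iff:
  assumes A: "\<And>\<Gamma>. deriv s \<Gamma> (kolmogorov A) \<longleftrightarrow> deriv s \<Gamma> (NegNeg A)"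
    and B: "\<And>\<Gamma>. deriv s \<Gamma> (kolmogorov B) \<longleftrightarrow> deriv s \<Gamma> (NegNeg B)"
  shows "deriv s \<Gamma> (kolmogorov (Imp A B)) \<longleftrightarrow> deriv s \<Gamma> (NegNeg (Imp A B))"
proof
  assume "deriv s \<Gamma> (kolmogorov (Imp A B))"
  then have "deriv s \<Gamma> (NegNeg (Imp (kolmogorov A) (kolmogorov B)))"
    by simp
  moreover
  let ?\<Delta> = "insert (Neg (Imp A B)) (insert (Imp (kolmogorov A) (kolmogorov B)) \<Gamma>)"
  have "deriv s ?\<Delta> Bot"
  proof -
    have "deriv s ?\<Delta> (NegNeg A)"
      by (rule NegI, rule NegE[OF deriv_hyp2], rule deriv.impI, rule deriv.botE,
          rule NegE[OF deriv_hyp2 deriv_hyp1])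
    then have "deriv s ?\<Delta> (kolmogorov B)"
      using A deriv.impE[OF deriv_hyp2] by blast
    then have "deriv s ?\<Delta> (NegNeg B)"
      using B by blast
    moreover have "deriv s ?\<Delta> (Neg B)"
      by (rule NegI, rule NegE[OF deriv_hyp2], rule deriv.impI, rule deriv_hyp2)
    ultimately show "deriv s ?\<Delta> Bot"
      by (rule NegE)
  qed
  ultimately show "deriv s \<Gamma> (NegNeg (Imp A B))"
    by (blast intro: NegNeg_Neg NegI)
next
  assume "deriv s \<Gamma> (NegNeg (Imp A B))"
  moreover
  let ?\<Delta> = "insert (kolmogorov A) (insert (Imp A B) \<Gamma>)"
  have "deriv s ?\<Delta> (NegNeg A)"
    using A deriv_hyp1 by blast
  then have "deriv s ?\<Delta> (NegNeg B)"
    using deriv.impE[OF deriv_hyp3 deriv_hyp1] by (rule NegNeg_mono)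
  then have "deriv s ?\<Delta> (kolmogorov B)"
    using B by blast
  ultimately have "deriv s \<Gamma> (NegNeg (Imp (kolmogorov A) (kolmogorov B)))"
    by (blast intro: NegNeg_mono deriv.impI)
  then show "deriv s \<Gamma> (kolmogorov (Imp A B))"
    by simp
qed

lemma kolmogorov_Ex_iff:
  assumes A: "\<And>\<Gamma>. deriv s \<Gamma> (kolmogorov A) \<longleftrightarrow> deriv s \<Gamma> (NegNeg A)"
  shows "deriv s \<Gamma> (kolmogorov (Ex A)) \<longleftrightarrow> deriv s \<Gamma> (NegNeg (Ex A))"
proof
  assume "deriv s \<Gamma> (kolmogorov (Ex A))"
  then have "deriv s \<Gamma> (NegNeg (Ex (kolmogorov A)))"
    by simp
  moreover have "deriv s (insert (Ex (kolmogorov A)) \<Gamma>) (Ex (NegNeg A))"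
    using Ex_mono[OF deriv_hyp1] A deriv_hyp1 by blast
  ultimately show "deriv s \<Gamma> (NegNeg (Ex A))"
    by (blast intro: NegNeg_Neg Ex_NegNeg)
next
  assume "deriv s \<Gamma> (NegNeg (Ex A))"
  then have "deriv s \<Gamma> (NegNeg (Ex (kolmogorov A)))"
  proof (rule NegNeg_mono)
    show "deriv s (insert (Ex A) \<Gamma>) (Ex (kolmogorov A))"
      using Ex_mono[OF deriv_hyp1] A NegNegI deriv_hyp1 by blast
  qed
  then show "deriv s \<Gamma> (kolmogorov (Ex A))"
    by simp
qed

lemma kolmogorov_iff_NegNeg:
  "all_free A \<Longrightarrow> deriv s \<Gamma> (kolmogorov A) \<longleftrightarrow> deriv s \<Gamma> (NegNeg A)"
proof (induction A arbitrary: \<Gamma>)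
  case Bot
  show ?case
    by (auto intro: NegNegI NegNeg_Bot deriv_hyp1)
next
  case (Conj A B)
  then show ?case by (intro kolmogorov_Conj_iff) auto
next
  case (Disj A B)
  then show ?case by (intro kolmogorov_Disj_iff) auto
next
  case (Imp A B)
  then show ?case by (intro kolmogorov_Imp_iff) auto
next
  case (Ex A)
  then show ?case by (intro kolmogorov_Ex_iff) auto
qed auto

lemma kolmogorov_excluded_middle:
  assumes "deriv s (insert (kolmogorov A) \<Gamma>) (kolmogorov C)"
    and "deriv s (insert (kolmogorov (Neg A)) \<Gamma>) (kolmogorov C)"
  shows "deriv s \<Gamma> (kolmogorov C)"
proof (rule kolmogorov_stable, rule NegI)
  let ?\<Delta> = "insert (Neg (kolmogorov C)) \<Gamma>"
  have "deriv s ?\<Delta> (Neg (kolmogorov A))"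
    by (rule NegI, rule NegE[OF deriv_hyp2], rule deriv_mono[OF assms(1)]) blast
  then have "deriv s ?\<Delta> (kolmogorov (Neg A))"
    by (simp add: kolmogorov_Neg NegNegI)
  then have "deriv s ?\<Delta> (kolmogorov C)"
    by (rule deriv_cut) (rule deriv_mono[OF assms(2)], blast)
  then show "deriv s ?\<Delta> Bot"
    by (rule NegE[OF deriv_hyp1])
qed

lemma kolmogorov_induction:
  assumes base: "deriv s \<Gamma> (kolmogorov (inst A Zero))"
    and step: "deriv s \<Gamma> (kolmogorov (Neg (Ex (Neg (Imp A (succ_body A))))))"
  shows "deriv s \<Gamma> (kolmogorov (Neg (Ex (Neg A))))"
proof -
  let ?I = "Imp (kolmogorov A) (succ_body (kolmogorov A))"
  have "deriv s \<Gamma> (NegNeg (Neg (NegNeg (Ex (NegNeg (Neg (NegNeg ?I)))))))"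
    using step by (simp add: kolmogorov_Neg kolmogorov_succ_body)
  then have "deriv s \<Gamma> (Neg (Ex (NegNeg (Neg (NegNeg ?I)))))"
    by (rule Neg_NegNeg[OF Neg_NegNeg])
  then have "deriv s \<Gamma> (Neg (Ex (Neg (NegNeg ?I))))"
    by (rule Neg_Ex_antimono) (rule NegNegI, rule deriv_hyp1)
  then have "deriv s \<Gamma> (Neg (Ex (Neg ?I)))"
    by (rule Neg_Ex_antimono) (rule NegNegI, rule deriv_hyp1)
  with base have "deriv s \<Gamma> (Neg (Ex (Neg (kolmogorov A))))"
    by (simp add: kolmogorov_inst deriv.ind)
  then have "deriv s \<Gamma> (Neg (Ex (NegNeg (Neg (kolmogorov A)))))"
    by (rule Neg_Ex_antimono) (rule Neg_NegNeg, rule deriv_hyp1)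
  then show ?thesis
    by (simp add: kolmogorov_Neg NegNegI)
qed

lemma kolmogorov_translation:
  "deriv PAex \<Gamma> A \<Longrightarrow> deriv s (kolmogorov ` \<Gamma>) (kolmogorov A)"
proof (induction PAex \<Gamma> A rule: deriv.induct)
  case (hyp A \<Gamma>)
  then show ?case by (auto intro: deriv.hyp)
next
  case (ax B \<Gamma>)
  then show ?case
    using kolmogorov_iff_NegNeg[OF all_free_extr] by (blast intro: NegNegI deriv.ax)
next
  case (conjI \<Gamma> A B)
  then show ?case by (simp add: NegNegI deriv.conjI)
next
  case (conjE1 \<Gamma> A B)
  then show ?case
    by (simp add: NegNeg_kolmogorov deriv.conjE1[OF deriv_hyp1])
next
  case (conjE2 \<Gamma> A B)
  then show ?case
    by (simp add: NegNeg_kolmogorov deriv.conjE2[OF deriv_hyp1])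
next
  case (disjI1 \<Gamma> A B)
  then show ?case by (simp add: NegNegI deriv.disjI1)
next
  case (disjI2 \<Gamma> B A)
  then show ?case by (simp add: NegNegI deriv.disjI2)
next
  case (disjE \<Gamma> A B C)
  then have disj: "deriv s (kolmogorov ` \<Gamma>) (NegNeg (Disj (kolmogorov A) (kolmogorov B)))"
    and left: "deriv s (insert (kolmogorov A) (kolmogorov ` \<Gamma>)) (kolmogorov C)"
    and right: "deriv s (insert (kolmogorov B) (kolmogorov ` \<Gamma>)) (kolmogorov C)"
    by simp_all
  show ?case
    by (rule NegNeg_kolmogorov[OF disj deriv.disjE[OF deriv_hyp1]])
      (rule deriv_insert_under[OF left], rule deriv_insert_under[OF right])
next
  case (impI A \<Gamma> B)
  then show ?case by (simp add: NegNegI deriv.impI)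
next
  case (impE \<Gamma> A B)
  then have imp: "deriv s (kolmogorov ` \<Gamma>) (NegNeg (Imp (kolmogorov A) (kolmogorov B)))"
    and prem: "deriv s (kolmogorov ` \<Gamma>) (kolmogorov A)"
    by simp_all
  show ?case
    by (rule NegNeg_kolmogorov[OF imp deriv.impE[OF deriv_hyp1 deriv_insert[OF prem]]])
next
  case (botE \<Gamma> A)
  then show ?case by (simp add: deriv.botE)
next
  case (exI \<Gamma> A t)
  then show ?case
    by (simp add: NegNegI deriv.exI[where t=t] kolmogorov_inst)
next
  case (exE \<Gamma> A C)
  then have ex: "deriv s (kolmogorov ` \<Gamma>) (NegNeg (Ex (kolmogorov A)))"
    and body: "deriv s (insert (kolmogorov A) (lift ` kolmogorov ` \<Gamma>)) (lift (kolmogorov C))"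
    by (simp_all add: image_image kolmogorov_lift)
  show ?case
    by (rule NegNeg_kolmogorov[OF ex deriv.exE[OF deriv_hyp1]])
      (simp add: deriv_insert_under[OF body])
next
  case (ind \<Gamma> A)
  then show ?case by (blast intro: kolmogorov_induction)
next
  case (em A \<Gamma> C)
  then show ?case by (simp add: kolmogorov_excluded_middle)
qed

section \<open>Markov's principle for atomic formulas\<close>

lemma Neq_Eq_contradiction:
  assumes "deriv s \<Gamma> (Neq t u)" and "deriv s \<Gamma> (Eq t u)"
  shows "deriv s \<Gamma> Bot"
proof -
  let ?Z = "Imp (Neq (Var 1) (Var 0)) (Neg (Eq (Var 1) (Var 0)))"
  have "deriv s \<Gamma> (extr (All (All ?Z)))"
    by (rule deriv.ax) (simp add: ha_axioms_def)
  then have "deriv s \<Gamma> (Neg (Ex (Neg (Neg (Ex (Neg ?Z))))))"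
    by simp
  from forall_elim[OF this, of t]
  have "deriv s \<Gamma> (Neg (NegNeg (Ex (Neg (fsubst (up (\<lambda>n. case n of 0 \<Rightarrow> t | Suc m \<Rightarrow> Var m)) ?Z)))))"
    by (simp add: inst_def)
  from forall_elim[OF Neg_NegNeg[OF this], of u]
  have "deriv s \<Gamma> (NegNeg (Imp (Neq t u) (Neg (Eq t u))))"
    by (simp add: inst_def up_def tsubst_tsubst)
  then show ?thesis
    by (rule NegNeg_Bot)
      (rule NegE[OF deriv.impE[OF deriv_hyp1 deriv_insert[OF assms(1)]] deriv_insert[OF assms(2)]])
qed

lemma atomic_comp_contradiction:
  "atomic P \<Longrightarrow> deriv s \<Gamma> P \<Longrightarrow> deriv s \<Gamma> (comp P) \<Longrightarrow> deriv s \<Gamma> Bot"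
  by (cases P) (auto intro: Neq_Eq_contradiction)

lemma markov_atomic:
  assumes "atomic P" and "deriv HAexEM1 \<Gamma> (NegNeg (Ex P))"
  shows "deriv HAexEM1 \<Gamma> (Ex P)"
proof (rule deriv.em1[of "comp P"])
  show "atomic (comp P)" and "atomic P"
    using assms(1) by (cases P; simp)+
  show "deriv HAexEM1 (insert (Ex (comp (comp P))) \<Gamma>) (Ex P)"
    using assms(1) by (cases P) (simp_all add: deriv_hyp1)
  let ?\<Delta> = "insert (Neg (Ex (Neg (comp P)))) \<Gamma>"
  let ?\<Delta>' = "insert P (lift ` insert (Ex P) ?\<Delta>)"
  have "deriv HAexEM1 ?\<Delta>' (Neg (lift (Ex (Neg (comp P)))))"
    by (rule deriv.hyp) simp
  moreover have "deriv HAexEM1 ?\<Delta>' (lift (Ex (Neg (comp P))))"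
    by (rule lift_ExI, rule NegI, rule atomic_comp_contradiction[OF assms(1) deriv_hyp2 deriv_hyp1])
  ultimately have "deriv HAexEM1 ?\<Delta>' (lift Bot)"
    by (simp add: NegE)
  then have "deriv HAexEM1 ?\<Delta> Bot"
    by (rule NegNeg_Bot[OF deriv_insert[OF assms(2)] deriv.exE[OF deriv_hyp1]])
  then show "deriv HAexEM1 ?\<Delta> (Ex P)"
    by (rule deriv.botE)
qed

theorem mainTheorem11:
  assumes "atomic P"
      and "deriv PAex {} (Ex P)"
  shows "deriv HAexEM1 {} (Ex P)"
proof -
  have "kolmogorov P = NegNeg P"
    using assms(1) by (cases P) auto
  then have "deriv HAexEM1 {} (NegNeg (Ex (NegNeg P)))"
    using kolmogorov_translation[OF assms(2), of HAexEM1] by simp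
  then have "deriv HAexEM1 {} (NegNeg (Ex P))"
    by (rule NegNeg_Neg) (rule Ex_NegNeg[OF deriv_hyp1])
  then show ?thesis
    by (rule markov_atomic[OF assms(1)])
qed

end
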